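(* Let $\beta_1,\beta_2>0$, $\tau\in(0,1)$, and suppose $(\bar x,\bar y)\in X\times\mathbb{R}^m$ satisfies the excessive gap condition $f(\bar x;\beta_2)\le d(\bar y;\beta_1)$. Set $\beta_1^+:=(1-\tau)\beta_1$, $\beta_2^+:=(1-\tau)\beta_2$ and define $$\hat x:=(1-\tau)\bar x+\tau x^*(\bar y;\beta_1),\qquad \bar y^+:=(1-\tau)\bar y+\tau y^*(\hat x;\beta_2^+),\qquad \bar x^+:=P(\hat x;\beta_2^+).$$ If $$\beta_1\beta_2\ge\frac{2\tau^2}{(1-\tau)^2}\max_{i=1,2}\frac{\|A_i\|^2}{\sigma_i},$$ then $(\bar x^+,\bar y^+)\in X\times\mathbb{R}^m$ and $f(\bar x^+;\beta_2^+)\le d(\bar y^+;\beta_1^+)$.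
   Context: All spaces carry the Euclidean inner product and norm $\|\cdot\|$; for a matrix, $\|\cdot\|$ is the induced operator norm. For $i=1,2$: $X_i\subset\mathbb{R}^{n_i}$ is nonempty, closed, convex and bounded; $\phi_i:\mathbb{R}^{n_i}\to\mathbb{R}$ is convex; $A_i\in\mathbb{R}^{m\times n_i}$; $b\in\mathbb{R}^m$. Write $x=(x_1,x_2)$, $X=X_1\times X_2$, $A=[A_1,A_2]$ (so $Ax=A_1x_1+A_2x_2$), $\phi(x)=\phi_1(x_1)+\phi_2(x_2)$. For $i=1,2$, $p_i$ is a prox-function of $X_i$: continuous and strongly convex on $X_i$ with convexity parameter $\sigma_i>0$, with prox-center $x_i^c=\arg\min_{x_i\in X_i}p_i(x_i)$ normalized so $p_i(x_i^c)=0$. For $\beta_1>0$, $d(y;\beta_1):=\min_{x\in X}\{\phi(x)+y^T(Ax-b)+\beta_1(p_1(x_1)+p_2(x_2))\}$, whose (unique) minimizer is denoted $x^*(y;\beta_1)=(x_1^*(y;\beta_1),x_2^*(y;\beta_1))$. For $\beta_2>0$, $y^*(x;\beta_2):=\frac{1}{\beta_2}(Ax-b)$ and $f(x;\beta_2):=\phi(x)+\frac{1}{2\beta_2}\|Ax-b\|^2$. With $L_i^\psi(\beta_2):=\frac{2\|A_i\|^2}{\beta_2}$, the proximal mapping is $P_i(\hat x;\beta_2):=\arg\min_{x_i\in X_i}\{\phi_i(x_i)+y^*(\hat x;\beta_2)^TA_i(x_i-\hat x_i)+\frac{L_i^\psi(\beta_2)}{2}\|x_i-\hat x_i\|^2\}$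 for $\hat x=(\hat x_1,\hat x_2)$, and $P(\hat x;\beta_2):=(P_1(\hat x;\beta_2),P_2(\hat x;\beta_2))$. *)

theory Defs
  imports "HOL-Analysis.Analysis"
begin

definition strongly_convex_on :: "'a::real_normed_vector set \<Rightarrow> ('a \<Rightarrow> real) \<Rightarrow> real \<Rightarrow> bool" where
  "strongly_convex_on S f \<sigma> \<longleftrightarrow> convex S \<and>
     (\<forall>x\<in>S. \<forall>y\<in>S. \<forall>t::real. 0 \<le> t \<and> t \<le> 1 \<longrightarrow>
        f ((1 - t) *\<^sub>R x + t *\<^sub>R y) \<le> (1 - t) * f x + t * f y - \<sigma> / 2 * t * (1 - t) * (norm (x - y))\<^sup>2)"

definition prox_function :: "'a::real_normed_vector set \<Rightarrow> ('a \<Rightarrow> real) \<Rightarrow> real \<Rightarrow> 'a \<Rightarrow> bool" where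
  "prox_function S p \<sigma> xc \<longleftrightarrow> \<sigma> > 0 \<and> continuous_on S p \<and> strongly_convex_on S p \<sigma> \<and>
     xc \<in> S \<and> (\<forall>x\<in>S. p xc \<le> p x) \<and> p xc = 0"

definition mnorm :: "real^'n^'m \<Rightarrow> real" where
  "mnorm M = onorm (\<lambda>x. M *v x)"

definition lagr ::
  "(real^'n1 \<Rightarrow> real) \<Rightarrow> (real^'n2 \<Rightarrow> real) \<Rightarrow> real^'n1^'m \<Rightarrow> real^'n2^'m \<Rightarrow> real^'m \<Rightarrow>
   (real^'n1 \<Rightarrow> real) \<Rightarrow> (real^'n2 \<Rightarrow> real) \<Rightarrow> real \<Rightarrow> real^'m \<Rightarrow> (real^'n1) \<times> (real^'n2) \<Rightarrow> real" where
  "lagr \<phi>1 \<phi>2 A1 A2 b p1 p2 \<beta>1 y x =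
     \<phi>1 (fst x) + \<phi>2 (snd x) + y \<bullet> (A1 *v fst x + A2 *v snd x - b) + \<beta>1 * (p1 (fst x) + p2 (snd x))"

definition dfun ::
  "(real^'n1) set \<Rightarrow> (real^'n2) set \<Rightarrow> (real^'n1 \<Rightarrow> real) \<Rightarrow> (real^'n2 \<Rightarrow> real) \<Rightarrow> real^'n1^'m \<Rightarrow> real^'n2^'m \<Rightarrow> real^'m \<Rightarrow>
   (real^'n1 \<Rightarrow> real) \<Rightarrow> (real^'n2 \<Rightarrow> real) \<Rightarrow> real^'m \<Rightarrow> real \<Rightarrow> real" where
  "dfun X1 X2 \<phi>1 \<phi>2 A1 A2 b p1 p2 y \<beta>1 = Inf (lagr \<phi>1 \<phi>2 A1 A2 b p1 p2 \<beta>1 y ` (X1 \<times> X2))"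

definition xstar ::
  "(real^'n1) set \<Rightarrow> (real^'n2) set \<Rightarrow> (real^'n1 \<Rightarrow> real) \<Rightarrow> (real^'n2 \<Rightarrow> real) \<Rightarrow> real^'n1^'m \<Rightarrow> real^'n2^'m \<Rightarrow> real^'m \<Rightarrow>
   (real^'n1 \<Rightarrow> real) \<Rightarrow> (real^'n2 \<Rightarrow> real) \<Rightarrow> real^'m \<Rightarrow> real \<Rightarrow> (real^'n1) \<times> (real^'n2)" where
  "xstar X1 X2 \<phi>1 \<phi>2 A1 A2 b p1 p2 y \<beta>1 =
     (SOME z. z \<in> X1 \<times> X2 \<and> (\<forall>w\<in>X1 \<times> X2. lagr \<phi>1 \<phi>2 A1 A2 b p1 p2 \<beta>1 y z \<le> lagr \<phi>1 \<phi>2 A1 A2 b p1 p2 \<beta>1 y w))"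

definition ystar :: "real^'n1^'m \<Rightarrow> real^'n2^'m \<Rightarrow> real^'m \<Rightarrow> (real^'n1) \<times> (real^'n2) \<Rightarrow> real \<Rightarrow> real^'m" where
  "ystar A1 A2 b x \<beta>2 = (1 / \<beta>2) *\<^sub>R (A1 *v fst x + A2 *v snd x - b)"

definition ffun :: "(real^'n1 \<Rightarrow> real) \<Rightarrow> (real^'n2 \<Rightarrow> real) \<Rightarrow> real^'n1^'m \<Rightarrow> real^'n2^'m \<Rightarrow> real^'m \<Rightarrow>
   (real^'n1) \<times> (real^'n2) \<Rightarrow> real \<Rightarrow> real" where
  "ffun \<phi>1 \<phi>2 A1 A2 b x \<beta>2 = \<phi>1 (fst x) + \<phi>2 (snd x) + 1 / (2 * \<beta>2) * (norm (A1 *v fst x + A2 *v snd x - b))\<^sup>2"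

definition Lpsi :: "real^'n^'m \<Rightarrow> real \<Rightarrow> real" where
  "Lpsi Ai \<beta>2 = 2 * (mnorm Ai)\<^sup>2 / \<beta>2"

text \<open>Block proximal step: argmin over Xi of phi_i(z) + yv^T A_i (z - xh) + L/2 ||z - xh||^2,
  where yv = y*(xhat; beta2) and xh is the i-th block of xhat.\<close>
definition proxblk :: "(real^'n) set \<Rightarrow> (real^'n \<Rightarrow> real) \<Rightarrow> real^'n^'m \<Rightarrow> real^'m \<Rightarrow> real^'n \<Rightarrow> real \<Rightarrow> real^'n" where
  "proxblk Xi \<phi>i Ai yv xh \<beta>2 =
     (SOME z. z \<in> Xi \<and> (\<forall>w\<in>Xi.
        \<phi>i z + yv \<bullet> (Ai *v (z - xh)) + Lpsi Ai \<beta>2 / 2 * (norm (z - xh))\<^sup>2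
        \<le> \<phi>i w + yv \<bullet> (Ai *v (w - xh)) + Lpsi Ai \<beta>2 / 2 * (norm (w - xh))\<^sup>2))"

definition Pmap :: "(real^'n1) set \<Rightarrow> (real^'n2) set \<Rightarrow> (real^'n1 \<Rightarrow> real) \<Rightarrow> (real^'n2 \<Rightarrow> real) \<Rightarrow>
   real^'n1^'m \<Rightarrow> real^'n2^'m \<Rightarrow> real^'m \<Rightarrow> (real^'n1) \<times> (real^'n2) \<Rightarrow> real \<Rightarrow> (real^'n1) \<times> (real^'n2)" where
  "Pmap X1 X2 \<phi>1 \<phi>2 A1 A2 b xh \<beta>2 =
     (proxblk X1 \<phi>1 A1 (ystar A1 A2 b xh \<beta>2) (fst xh) \<beta>2,
      proxblk X2 \<phi>2 A2 (ystar A1 A2 b xh \<beta>2) (snd xh) \<beta>2)"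

end

theory Submission
  imports Defs
begin

(* Fix an arbitrary point v of X.  The new primal value f(xbar+; beta2+) is bounded
   above in four moves: (1) the quadratic penalty of the proximal step is majorised by
   its linearisation at xhat plus the block terms with constants L_i^psi;
   (2) each block prox problem is compared with the feasible point
   (1 - tau) xbar_i + tau v_i; (3) the penalty at xhat is split by convexity of the
   squared norm between xbar and x*(ybar; beta1); (4) the excessive gap at (xbar, ybar)
   together with the quadratic growth of the strongly convex Lagrangian around its
   minimiser x*(ybar; beta1) absorbs what remains, the step-size condition on
   beta1 beta2 making the quadratic terms match.  The result is that f(xbar+; beta2+)
   is below the smoothed Lagrangian at (v, ybar+) with parameter beta1+; taking the
   infimum over v gives the claim. *)

lemma matrix_vector_continuous_on [continuous_intros]:
  "continuous_on S f \<Longrightarrow> continuous_on S (\<lambda>z. (A::real^'n^'m) *v f z)"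
  by (rule bounded_linear.continuous_on[OF matrix_vector_mul_bounded_linear])

definition prox_obj ::
  "(real^'n \<Rightarrow> real) \<Rightarrow> real^'n^'m \<Rightarrow> real^'m \<Rightarrow> real^'n \<Rightarrow> real \<Rightarrow> real^'n \<Rightarrow> real" where
  "prox_obj \<phi>i Ai yv xh \<beta> z = \<phi>i z + yv \<bullet> (Ai *v (z - xh)) + Lpsi Ai \<beta> / 2 * (norm (z - xh))\<^sup>2"

lemma proxblk_minimizes:
  fixes Xi :: "(real^'n) set"
  assumes "compact Xi" "Xi \<noteq> {}" "convex_on UNIV \<phi>i"
  shows "proxblk Xi \<phi>i Ai yv xh \<beta> \<in> Xi \<and>
    (\<forall>w\<in>Xi. prox_obj \<phi>i Ai yv xh \<beta> (proxblk Xi \<phi>i Ai yv xh \<beta>) \<le> prox_obj \<phi>i Ai yv xh \<beta> w)"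
proof -
  have "continuous_on Xi \<phi>i"
    using convex_on_continuous[OF open_UNIV assms(3)] continuous_on_subset by blast
  then have "continuous_on Xi (prox_obj \<phi>i Ai yv xh \<beta>)"
    unfolding prox_obj_def by (intro continuous_intros)
  from continuous_attains_inf[OF assms(1,2) this]
  have "\<exists>z. z \<in> Xi \<and> (\<forall>w\<in>Xi. prox_obj \<phi>i Ai yv xh \<beta> z \<le> prox_obj \<phi>i Ai yv xh \<beta> w)"
    by blast
  from someI_ex[OF this] show ?thesis
    unfolding proxblk_def prox_obj_def .
qed

lemma xstar_minimizes:
  fixes X1 :: "(real^'n1) set" and X2 :: "(real^'n2) set"
  assumes "compact X1" "X1 \<noteq> {}" "compact X2" "X2 \<noteq> {}"
    and "convex_on UNIV \<phi>1" "convex_on UNIV \<phi>2" "continuous_on X1 p1" "continuous_on X2 p2"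
  shows "xstar X1 X2 \<phi>1 \<phi>2 A1 A2 b p1 p2 y \<beta> \<in> X1 \<times> X2 \<and>
    (\<forall>w\<in>X1 \<times> X2. lagr \<phi>1 \<phi>2 A1 A2 b p1 p2 \<beta> y (xstar X1 X2 \<phi>1 \<phi>2 A1 A2 b p1 p2 y \<beta>)
                   \<le> lagr \<phi>1 \<phi>2 A1 A2 b p1 p2 \<beta> y w)"
proof -
  have proj: "continuous_on (X1 \<times> X2) fst" "continuous_on (X1 \<times> X2) snd"
    by (auto intro: continuous_intros)
  have phi_cont: "continuous_on UNIV \<phi>1" "continuous_on UNIV \<phi>2"
    using assms(5,6) by (auto intro: convex_on_continuous)
  have "continuous_on (X1 \<times> X2) (lagr \<phi>1 \<phi>2 A1 A2 b p1 p2 \<beta> y)"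
    unfolding lagr_def
    by (intro continuous_intros proj continuous_on_compose2[OF phi_cont(1) proj(1)]
        continuous_on_compose2[OF phi_cont(2) proj(2)] continuous_on_compose2[OF assms(7) proj(1)]
        continuous_on_compose2[OF assms(8) proj(2)]) auto
  from continuous_attains_inf[OF compact_Times[OF assms(1,3)] _ this] assms(2,4)
  have "\<exists>z. z \<in> X1 \<times> X2 \<and> (\<forall>w\<in>X1 \<times> X2. lagr \<phi>1 \<phi>2 A1 A2 b p1 p2 \<beta> y z \<le> lagr \<phi>1 \<phi>2 A1 A2 b p1 p2 \<beta> y w)"
    by blast
  from someI_ex[OF this] show ?thesis
    unfolding xstar_def .
qed

lemma dfun_eq_minimum:
  assumes "z \<in> X1 \<times> X2"
    and "\<forall>w\<in>X1 \<times> X2. lagr \<phi>1 \<phi>2 A1 A2 b p1 p2 \<beta> y z \<le> lagr \<phi>1 \<phi>2 A1 A2 b p1 p2 \<beta> y w"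
  shows "dfun X1 X2 \<phi>1 \<phi>2 A1 A2 b p1 p2 y \<beta> = lagr \<phi>1 \<phi>2 A1 A2 b p1 p2 \<beta> y z"
  unfolding dfun_def using assms by (intro cInf_eq_minimum) auto

text \<open>Abstract quadratic growth: a value that no mixture along a segment can improve,
  up to the strong-convexity defect c, lies at least c below the other endpoint.\<close>
lemma growth_at_minimizer:
  fixes a f c :: real
  assumes "\<And>t. 0 < t \<Longrightarrow> t < 1 \<Longrightarrow> a \<le> (1 - t) * a + t * f - t * (1 - t) * c"
  shows "a + c \<le> f"
proof -
  have "\<forall>\<^sub>F t in at_right 0. (1 - t) * c \<le> f - a"
  proof (rule eventually_mono[OF eventually_at_right_real[of 0 1]])
    fix t :: real
    assume t: "t \<in> {0<..<1}"
    then have "t * ((1 - t) * c) \<le> t * (f - a)"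
      using assms[of t] by (simp add: algebra_simps)
    then show "(1 - t) * c \<le> f - a"
      using t by simp
  qed simp
  moreover have "((\<lambda>t. (1 - t) * c) \<longlongrightarrow> c) (at_right 0)"
    by (auto intro!: tendsto_eq_intros)
  ultimately have "c \<le> f - a"
    by (intro tendsto_upperbound) (auto simp: trivial_limit_at_right_real)
  then show ?thesis by simp
qed

lemma lagr_mixture:
  fixes X1 :: "(real^'n1) set" and X2 :: "(real^'n2) set"
  assumes phi: "convex_on UNIV \<phi>1" "convex_on UNIV \<phi>2"
    and sc: "strongly_convex_on X1 p1 \<sigma>1" "strongly_convex_on X2 p2 \<sigma>2"
    and \<beta>: "\<beta> \<ge> 0" and z: "z \<in> X1 \<times> X2" and v: "v \<in> X1 \<times> X2" and t: "0 \<le> t" "t \<le> 1"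
  shows "lagr \<phi>1 \<phi>2 A1 A2 b p1 p2 \<beta> y ((1 - t) *\<^sub>R z + t *\<^sub>R v)
    \<le> (1 - t) * lagr \<phi>1 \<phi>2 A1 A2 b p1 p2 \<beta> y z + t * lagr \<phi>1 \<phi>2 A1 A2 b p1 p2 \<beta> y v
       - t * (1 - t) * (\<beta> * (\<sigma>1 / 2 * (norm (fst v - fst z))\<^sup>2 + \<sigma>2 / 2 * (norm (snd v - snd z))\<^sup>2))"
proof -
  have phi_mix: "\<phi>1 ((1 - t) *\<^sub>R fst z + t *\<^sub>R fst v) \<le> (1 - t) * \<phi>1 (fst z) + t * \<phi>1 (fst v)"
      "\<phi>2 ((1 - t) *\<^sub>R snd z + t *\<^sub>R snd v) \<le> (1 - t) * \<phi>2 (snd z) + t * \<phi>2 (snd v)"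
    using convex_onD[OF phi(1)] convex_onD[OF phi(2)] t by auto
  have "p1 ((1 - t) *\<^sub>R fst z + t *\<^sub>R fst v)
      \<le> (1 - t) * p1 (fst z) + t * p1 (fst v) - \<sigma>1 / 2 * t * (1 - t) * (norm (fst z - fst v))\<^sup>2"
       "p2 ((1 - t) *\<^sub>R snd z + t *\<^sub>R snd v)
      \<le> (1 - t) * p2 (snd z) + t * p2 (snd v) - \<sigma>2 / 2 * t * (1 - t) * (norm (snd z - snd v))\<^sup>2"
    using sc z v t unfolding strongly_convex_on_def by (auto simp: mem_Times_iff)
  then have "\<beta> * (p1 ((1 - t) *\<^sub>R fst z + t *\<^sub>R fst v) + p2 ((1 - t) *\<^sub>R snd z + t *\<^sub>R snd v))
      \<le> \<beta> * ((1 - t) * p1 (fst z) + t * p1 (fst v) - \<sigma>1 / 2 * t * (1 - t) * (norm (fst v - fst z))\<^sup>2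
          + ((1 - t) * p2 (snd z) + t * p2 (snd v) - \<sigma>2 / 2 * t * (1 - t) * (norm (snd v - snd z))\<^sup>2))"
    using \<beta> by (intro mult_left_mono) (auto simp: norm_minus_commute)
  moreover have "A1 *v ((1 - t) *\<^sub>R fst z + t *\<^sub>R fst v) + A2 *v ((1 - t) *\<^sub>R snd z + t *\<^sub>R snd v) - b
      = (1 - t) *\<^sub>R (A1 *v fst z + A2 *v snd z - b) + t *\<^sub>R (A1 *v fst v + A2 *v snd v - b)"
    by (simp add: algebra_simps)
  ultimately show ?thesis
    using phi_mix unfolding lagr_def
    by (simp add: inner_add_right algebra_simps)
qed

lemma lagr_growth:
  fixes X1 :: "(real^'n1) set" and X2 :: "(real^'n2) set"
  assumes phi: "convex_on UNIV \<phi>1" "convex_on UNIV \<phi>2"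
    and sc: "strongly_convex_on X1 p1 \<sigma>1" "strongly_convex_on X2 p2 \<sigma>2"
    and \<beta>: "\<beta> \<ge> 0" and z: "z \<in> X1 \<times> X2"
    and z_min: "\<forall>w\<in>X1 \<times> X2. lagr \<phi>1 \<phi>2 A1 A2 b p1 p2 \<beta> y z \<le> lagr \<phi>1 \<phi>2 A1 A2 b p1 p2 \<beta> y w"
    and v: "v \<in> X1 \<times> X2"
  shows "lagr \<phi>1 \<phi>2 A1 A2 b p1 p2 \<beta> y z
      + \<beta> * (\<sigma>1 / 2 * (norm (fst v - fst z))\<^sup>2 + \<sigma>2 / 2 * (norm (snd v - snd z))\<^sup>2)
    \<le> lagr \<phi>1 \<phi>2 A1 A2 b p1 p2 \<beta> y v"
proof (rule growth_at_minimizer)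
  fix t :: real
  assume t: "0 < t" "t < 1"
  have "convex (X1 \<times> X2)"
    using sc unfolding strongly_convex_on_def by (auto intro: convex_Times)
  then have "(1 - t) *\<^sub>R z + t *\<^sub>R v \<in> X1 \<times> X2"
    using z v t by (auto intro: convexD)
  then have "lagr \<phi>1 \<phi>2 A1 A2 b p1 p2 \<beta> y z \<le> lagr \<phi>1 \<phi>2 A1 A2 b p1 p2 \<beta> y ((1 - t) *\<^sub>R z + t *\<^sub>R v)"
    by (rule bspec[OF z_min])
  also have "\<dots> \<le> (1 - t) * lagr \<phi>1 \<phi>2 A1 A2 b p1 p2 \<beta> y z + t * lagr \<phi>1 \<phi>2 A1 A2 b p1 p2 \<beta> y v
       - t * (1 - t) * (\<beta> * (\<sigma>1 / 2 * (norm (fst v - fst z))\<^sup>2 + \<sigma>2 / 2 * (norm (snd v - snd z))\<^sup>2))"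
    using t by (intro lagr_mixture[OF phi sc \<beta> z v]) auto
  finally show "lagr \<phi>1 \<phi>2 A1 A2 b p1 p2 \<beta> y z \<le> \<dots>" .
qed

text \<open>Convexity of the squared norm combined with the shrinking of beta by the factor 1 - tau:
  the penalty at a mixture is bounded by the old penalty plus a linear term.\<close>
lemma sq_norm_mixture_bound:
  fixes a w :: "'a::real_inner" and \<tau> \<beta> :: real
  assumes "0 < \<tau>" "\<tau> < 1" "\<beta> > 0"
  shows "(norm ((1 - \<tau>) *\<^sub>R a + \<tau> *\<^sub>R w))\<^sup>2 / (2 * ((1 - \<tau>) * \<beta>))
     \<le> (1 - \<tau>) * ((norm a)\<^sup>2 / (2 * \<beta>))
        + \<tau> * (((1 / ((1 - \<tau>) * \<beta>)) *\<^sub>R ((1 - \<tau>) *\<^sub>R a + \<tau> *\<^sub>R w)) \<bullet> w)"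
proof -
  have expand: "(norm ((1 - \<tau>) *\<^sub>R a + \<tau> *\<^sub>R w))\<^sup>2
      = (1 - \<tau>)\<^sup>2 * (a \<bullet> a) + 2 * \<tau> * (1 - \<tau>) * (a \<bullet> w) + \<tau>\<^sup>2 * (w \<bullet> w)"
    unfolding power2_norm_eq_inner
    by (simp add: inner_add_left inner_add_right inner_commute power2_eq_square algebra_simps)
  have inner: "((1 / ((1 - \<tau>) * \<beta>)) *\<^sub>R ((1 - \<tau>) *\<^sub>R a + \<tau> *\<^sub>R w)) \<bullet> w
      = ((1 - \<tau>) * (a \<bullet> w) + \<tau> * (w \<bullet> w)) / ((1 - \<tau>) * \<beta>)"
    by (simp add: inner_add_left divide_simps)
  have "\<tau> * (w \<bullet> w) \<le> w \<bullet> w"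
    using assms by (simp add: mult_left_le_one_le)
  moreover have "(norm a)\<^sup>2 = a \<bullet> a"
    by (simp add: power2_norm_eq_inner)
  ultimately show ?thesis
    unfolding expand inner using assms
    by (simp add: divide_simps power2_eq_square algebra_simps)
qed

lemma sq_norm_add_le: "(norm (a + b))\<^sup>2 \<le> 2 * (norm a)\<^sup>2 + 2 * (norm (b :: 'a::real_inner))\<^sup>2"
proof -
  have "0 \<le> (norm (a - b))\<^sup>2" by simp
  then show ?thesis
    unfolding power2_norm_eq_inner by (simp add: inner_add_left inner_add_right inner_diff_left
        inner_diff_right inner_commute)
qed

lemma mnorm_bound: "norm (A *v x) \<le> mnorm A * norm x"
  unfolding mnorm_def by (rule onorm) simp

lemma penalty_upper_bound:
  fixes u :: "real^'m" and A1 :: "real^'n1^'m" and A2 :: "real^'n2^'m"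
  assumes "\<beta> > 0"
  shows "(norm (u + (A1 *v e1 + A2 *v e2)))\<^sup>2 / (2 * \<beta>)
    \<le> (norm u)\<^sup>2 / (2 * \<beta>) + ((1 / \<beta>) *\<^sub>R u) \<bullet> (A1 *v e1) + ((1 / \<beta>) *\<^sub>R u) \<bullet> (A2 *v e2)
       + Lpsi A1 \<beta> / 2 * (norm e1)\<^sup>2 + Lpsi A2 \<beta> / 2 * (norm e2)\<^sup>2"
proof -
  define d where "d = A1 *v e1 + A2 *v e2"
  have "(norm (A1 *v e1))\<^sup>2 \<le> (mnorm A1 * norm e1)\<^sup>2" "(norm (A2 *v e2))\<^sup>2 \<le> (mnorm A2 * norm e2)\<^sup>2"
    by (simp_all add: power_mono mnorm_bound)
  then have d_bound: "(norm d)\<^sup>2 \<le> 2 * (mnorm A1)\<^sup>2 * (norm e1)\<^sup>2 + 2 * (mnorm A2)\<^sup>2 * (norm e2)\<^sup>2"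
    using sq_norm_add_le[of "A1 *v e1" "A2 *v e2"] unfolding d_def power_mult_distrib by linarith
  have "(norm (u + d))\<^sup>2 = (norm u)\<^sup>2 + 2 * (u \<bullet> d) + (norm d)\<^sup>2"
    unfolding power2_norm_eq_inner by (simp add: inner_add_left inner_add_right inner_commute)
  then have expand: "(norm (u + d))\<^sup>2 / (2 * \<beta>) = (norm u)\<^sup>2 / (2 * \<beta>) + (u \<bullet> d) / \<beta> + (norm d)\<^sup>2 / (2 * \<beta>)"
    using assms by (simp add: field_simps)
  have "(norm d)\<^sup>2 / (2 * \<beta>) \<le> (2 * (mnorm A1)\<^sup>2 * (norm e1)\<^sup>2 + 2 * (mnorm A2)\<^sup>2 * (norm e2)\<^sup>2) / (2 * \<beta>)"
    using d_bound assms by (simp add: divide_right_mono)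
  also have "\<dots> = Lpsi A1 \<beta> / 2 * (norm e1)\<^sup>2 + Lpsi A2 \<beta> / 2 * (norm e2)\<^sup>2"
    unfolding Lpsi_def by (simp add: add_divide_distrib)
  finally have "(norm d)\<^sup>2 / (2 * \<beta>) \<le> Lpsi A1 \<beta> / 2 * (norm e1)\<^sup>2 + Lpsi A2 \<beta> / 2 * (norm e2)\<^sup>2" .
  moreover have "((1 / \<beta>) *\<^sub>R u) \<bullet> (A1 *v e1) + ((1 / \<beta>) *\<^sub>R u) \<bullet> (A2 *v e2) = (u \<bullet> d) / \<beta>"
    unfolding d_def by (simp add: inner_add_right add_divide_distrib)
  ultimately show ?thesis
    unfolding d_def[symmetric] expand by linarith
qed

text \<open>Value of one block prox step, obtained by comparing with the feasible point
  (1 - tau) xb + tau v; here the prox centre h is (1 - tau) xb + tau z.\<close>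
lemma prox_block_bound:
  fixes Xi :: "(real^'n) set" and Ai :: "real^'n^'m"
  assumes Xi: "convex Xi" and phi: "convex_on UNIV \<phi>i"
    and mem: "xb \<in> Xi" "z \<in> Xi" "v \<in> Xi" and \<tau>: "0 \<le> \<tau>" "\<tau> \<le> 1"
    and h: "h = (1 - \<tau>) *\<^sub>R xb + \<tau> *\<^sub>R z"
    and q_min: "\<forall>w\<in>Xi. prox_obj \<phi>i Ai yv h \<beta> q \<le> prox_obj \<phi>i Ai yv h \<beta> w"
  shows "prox_obj \<phi>i Ai yv h \<beta> q
    \<le> (1 - \<tau>) * \<phi>i xb + \<tau> * \<phi>i v + \<tau> * (yv \<bullet> (Ai *v (v - z)))
       + Lpsi Ai \<beta> / 2 * (\<tau>\<^sup>2 * (norm (v - z))\<^sup>2)"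
proof -
  define w where "w = (1 - \<tau>) *\<^sub>R xb + \<tau> *\<^sub>R v"
  have "w \<in> Xi"
    unfolding w_def using Xi mem \<tau> by (auto intro: convexD)
  then have "prox_obj \<phi>i Ai yv h \<beta> q \<le> prox_obj \<phi>i Ai yv h \<beta> w"
    using q_min by blast
  moreover have "w - h = \<tau> *\<^sub>R (v - z)"
    unfolding w_def h by (simp add: algebra_simps)
  moreover have "\<phi>i w \<le> (1 - \<tau>) * \<phi>i xb + \<tau> * \<phi>i v"
    unfolding w_def using convex_onD[OF phi] \<tau> by simp
  ultimately show ?thesis
    unfolding prox_obj_def
    by (simp add: matrix_vector_mult_scaleR power_mult_distrib)
qed

text \<open>The step-size condition on beta1 beta2, for one block with constant c bounding
  ||A||^2 / sigma: the quadratic term produced by the prox step is dominated by the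
  strong convexity of the old Lagrangian.\<close>
lemma step_size_block:
  assumes "\<sigma> > 0" "\<beta>1 > 0" "\<beta>2 > 0" "0 < \<tau>" "\<tau> < 1" "n \<ge> 0"
    and "(mnorm A)\<^sup>2 / \<sigma> \<le> c" and "\<beta>1 * \<beta>2 \<ge> 2 * \<tau>\<^sup>2 / (1 - \<tau>)\<^sup>2 * c"
  shows "Lpsi A ((1 - \<tau>) * \<beta>2) / 2 * (\<tau>\<^sup>2 * n) \<le> (1 - \<tau>) * \<beta>1 * (\<sigma> / 2 * n)"
proof -
  have "0 \<le> 2 * \<tau>\<^sup>2 / (1 - \<tau>)\<^sup>2"
    by simp
  from order_trans[OF mult_left_mono[OF assms(7) this] assms(8)]
  have "2 * \<tau>\<^sup>2 / (1 - \<tau>)\<^sup>2 * ((mnorm A)\<^sup>2 / \<sigma>) \<le> \<beta>1 * \<beta>2" .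
  then have "2 * \<tau>\<^sup>2 * (mnorm A)\<^sup>2 \<le> (1 - \<tau>)\<^sup>2 * \<beta>1 * \<beta>2 * \<sigma>"
    using assms(1-5) by (simp add: divide_simps algebra_simps)
  then have "Lpsi A ((1 - \<tau>) * \<beta>2) / 2 * \<tau>\<^sup>2 \<le> (1 - \<tau>) * \<beta>1 * (\<sigma> / 2)"
    unfolding Lpsi_def using assms by (simp add: divide_simps power2_eq_square algebra_simps)
  from mult_right_mono[OF this assms(6)] show ?thesis
    by (simp add: algebra_simps)
qed

text \<open>Upper bound for the new primal value in terms of the old one: for every v in X1 x X2,
  with z standing for x*(ybar; beta1), h for xhat, yh for y*(xhat; beta2+) and q for
  P(xhat; beta2+).\<close>
lemma primal_step_bound:
  fixes X1 :: "(real^'n1) set" and X2 :: "(real^'n2) set"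
    and A1 :: "real^'n1^'m" and A2 :: "real^'n2^'m" and b :: "real^'m"
  assumes phi: "convex_on UNIV \<phi>1" "convex_on UNIV \<phi>2"
    and cvx: "convex X1" "convex X2" and sigma: "\<sigma>1 > 0" "\<sigma>2 > 0"
    and beta: "\<beta>1 > 0" "\<beta>2 > 0" and tau: "0 < \<tau>" "\<tau> < 1"
    and mem: "xbar \<in> X1 \<times> X2" "z \<in> X1 \<times> X2" "v \<in> X1 \<times> X2"
    and cond: "\<beta>1 * \<beta>2 \<ge> 2 * \<tau>\<^sup>2 / (1 - \<tau>)\<^sup>2 * max ((mnorm A1)\<^sup>2 / \<sigma>1) ((mnorm A2)\<^sup>2 / \<sigma>2)"
    and h: "h = (1 - \<tau>) *\<^sub>R xbar + \<tau> *\<^sub>R z"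
    and yh: "yh = ystar A1 A2 b h ((1 - \<tau>) * \<beta>2)"
    and q_min: "\<forall>w\<in>X1. prox_obj \<phi>1 A1 yh (fst h) ((1 - \<tau>) * \<beta>2) (fst q)
                         \<le> prox_obj \<phi>1 A1 yh (fst h) ((1 - \<tau>) * \<beta>2) w"
               "\<forall>w\<in>X2. prox_obj \<phi>2 A2 yh (snd h) ((1 - \<tau>) * \<beta>2) (snd q)
                         \<le> prox_obj \<phi>2 A2 yh (snd h) ((1 - \<tau>) * \<beta>2) w"
  shows "ffun \<phi>1 \<phi>2 A1 A2 b q ((1 - \<tau>) * \<beta>2)
    \<le> (1 - \<tau>) * (ffun \<phi>1 \<phi>2 A1 A2 b xbar \<beta>2
          + \<beta>1 * (\<sigma>1 / 2 * (norm (fst v - fst z))\<^sup>2 + \<sigma>2 / 2 * (norm (snd v - snd z))\<^sup>2))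
       + \<tau> * (\<phi>1 (fst v) + \<phi>2 (snd v) + yh \<bullet> (A1 *v fst v + A2 *v snd v - b))"
proof -
  define \<beta>2p where "\<beta>2p = (1 - \<tau>) * \<beta>2"
  define res where "res x = A1 *v fst x + A2 *v snd x - b" for x
  define e1 where "e1 = fst q - fst h"
  define e2 where "e2 = snd q - snd h"
  define n1 where "n1 = (norm (fst v - fst z))\<^sup>2"
  define n2 where "n2 = (norm (snd v - snd z))\<^sup>2"
  have \<beta>2p: "\<beta>2p > 0" using beta tau unfolding \<beta>2p_def by simp
  have yh_eq: "yh = (1 / \<beta>2p) *\<^sub>R res h"
    unfolding yh ystar_def res_def \<beta>2p_def ..
  have res_h: "res h = (1 - \<tau>) *\<^sub>R res xbar + \<tau> *\<^sub>R res z"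
    unfolding res_def h by (simp add: algebra_simps)
  have res_q: "res q = res h + (A1 *v e1 + A2 *v e2)"
    unfolding res_def e1_def e2_def by (simp add: algebra_simps)
  have prox1: "prox_obj \<phi>1 A1 yh (fst h) \<beta>2p (fst q)
      \<le> (1 - \<tau>) * \<phi>1 (fst xbar) + \<tau> * \<phi>1 (fst v) + \<tau> * (yh \<bullet> (A1 *v (fst v - fst z)))
         + Lpsi A1 \<beta>2p / 2 * (\<tau>\<^sup>2 * n1)"
    unfolding n1_def \<beta>2p_def using mem tau h q_min(1)
    by (intro prox_block_bound[OF cvx(1) phi(1)]) auto
  have prox2: "prox_obj \<phi>2 A2 yh (snd h) \<beta>2p (snd q)
      \<le> (1 - \<tau>) * \<phi>2 (snd xbar) + \<tau> * \<phi>2 (snd v) + \<tau> * (yh \<bullet> (A2 *v (snd v - snd z)))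
         + Lpsi A2 \<beta>2p / 2 * (\<tau>\<^sup>2 * n2)"
    unfolding n2_def \<beta>2p_def using mem tau h q_min(2)
    by (intro prox_block_bound[OF cvx(2) phi(2)]) auto
  have step1: "Lpsi A1 \<beta>2p / 2 * (\<tau>\<^sup>2 * n1) \<le> (1 - \<tau>) * \<beta>1 * (\<sigma>1 / 2 * n1)"
    unfolding \<beta>2p_def n1_def by (rule step_size_block[OF sigma(1) beta tau _ max.cobounded1 cond]) simp
  have step2: "Lpsi A2 \<beta>2p / 2 * (\<tau>\<^sup>2 * n2) \<le> (1 - \<tau>) * \<beta>1 * (\<sigma>2 / 2 * n2)"
    unfolding \<beta>2p_def n2_def by (rule step_size_block[OF sigma(2) beta tau _ max.cobounded2 cond]) simp
  have mixture: "(norm (res h))\<^sup>2 / (2 * \<beta>2p)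
      \<le> (1 - \<tau>) * ((norm (res xbar))\<^sup>2 / (2 * \<beta>2)) + \<tau> * (yh \<bullet> res z)"
    using sq_norm_mixture_bound[OF tau beta(2)] unfolding res_h yh_eq \<beta>2p_def .
  have old_terms: "(1 - \<tau>) * (ffun \<phi>1 \<phi>2 A1 A2 b xbar \<beta>2 + \<beta>1 * (\<sigma>1 / 2 * n1 + \<sigma>2 / 2 * n2))
      = (1 - \<tau>) * \<phi>1 (fst xbar) + (1 - \<tau>) * \<phi>2 (snd xbar)
        + (1 - \<tau>) * ((norm (res xbar))\<^sup>2 / (2 * \<beta>2))
        + (1 - \<tau>) * \<beta>1 * (\<sigma>1 / 2 * n1) + (1 - \<tau>) * \<beta>1 * (\<sigma>2 / 2 * n2)"
    unfolding ffun_def res_def by (simp add: algebra_simps)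
  have new_terms: "\<tau> * (\<phi>1 (fst v) + \<phi>2 (snd v) + yh \<bullet> res v)
      = \<tau> * \<phi>1 (fst v) + \<tau> * \<phi>2 (snd v) + \<tau> * (yh \<bullet> (A1 *v (fst v - fst z)))
        + \<tau> * (yh \<bullet> (A2 *v (snd v - snd z))) + \<tau> * (yh \<bullet> res z)"
    unfolding res_def
    by (simp add: inner_add_right inner_diff_right matrix_vector_mult_diff_distrib algebra_simps)
  have "ffun \<phi>1 \<phi>2 A1 A2 b q \<beta>2p
      = \<phi>1 (fst q) + \<phi>2 (snd q) + (norm (res h + (A1 *v e1 + A2 *v e2)))\<^sup>2 / (2 * \<beta>2p)"
    unfolding ffun_def res_q[symmetric] by (simp add: res_def)
  also have "\<dots> \<le> prox_obj \<phi>1 A1 yh (fst h) \<beta>2p (fst q) + prox_obj \<phi>2 A2 yh (snd h) \<beta>2p (snd q)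
      + (norm (res h))\<^sup>2 / (2 * \<beta>2p)"
    using penalty_upper_bound[OF \<beta>2p, of "res h" A1 e1 A2 e2]
    unfolding prox_obj_def e1_def e2_def yh_eq by simp
  also have "\<dots> \<le> (1 - \<tau>) * (ffun \<phi>1 \<phi>2 A1 A2 b xbar \<beta>2 + \<beta>1 * (\<sigma>1 / 2 * n1 + \<sigma>2 / 2 * n2))
      + \<tau> * (\<phi>1 (fst v) + \<phi>2 (snd v) + yh \<bullet> res v)"
    unfolding old_terms new_terms using prox1 prox2 step1 step2 mixture by linarith
  finally show ?thesis
    unfolding \<beta>2p_def n1_def n2_def res_def .
qed

lemma gap_step:
  fixes X1 :: "(real^'n1) set" and X2 :: "(real^'n2) set"
    and A1 :: "real^'n1^'m" and A2 :: "real^'n2^'m" and b :: "real^'m"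
  assumes ne: "X1 \<noteq> {}" "X2 \<noteq> {}"
    and phi: "convex_on UNIV \<phi>1" "convex_on UNIV \<phi>2"
    and sc: "strongly_convex_on X1 p1 \<sigma>1" "strongly_convex_on X2 p2 \<sigma>2"
    and sigma: "\<sigma>1 > 0" "\<sigma>2 > 0"
    and beta: "\<beta>1 > 0" "\<beta>2 > 0" and tau: "0 < \<tau>" "\<tau> < 1"
    and xbar: "xbar \<in> X1 \<times> X2" and z: "z \<in> X1 \<times> X2"
    and z_min: "\<forall>w\<in>X1 \<times> X2. lagr \<phi>1 \<phi>2 A1 A2 b p1 p2 \<beta>1 ybar z \<le> lagr \<phi>1 \<phi>2 A1 A2 b p1 p2 \<beta>1 ybar w"
    and egap: "ffun \<phi>1 \<phi>2 A1 A2 b xbar \<beta>2 \<le> lagr \<phi>1 \<phi>2 A1 A2 b p1 p2 \<beta>1 ybar z"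
    and cond: "\<beta>1 * \<beta>2 \<ge> 2 * \<tau>\<^sup>2 / (1 - \<tau>)\<^sup>2 * max ((mnorm A1)\<^sup>2 / \<sigma>1) ((mnorm A2)\<^sup>2 / \<sigma>2)"
    and h: "h = (1 - \<tau>) *\<^sub>R xbar + \<tau> *\<^sub>R z"
    and yh: "yh = ystar A1 A2 b h ((1 - \<tau>) * \<beta>2)"
    and q_min: "\<forall>w\<in>X1. prox_obj \<phi>1 A1 yh (fst h) ((1 - \<tau>) * \<beta>2) (fst q)
                         \<le> prox_obj \<phi>1 A1 yh (fst h) ((1 - \<tau>) * \<beta>2) w"
               "\<forall>w\<in>X2. prox_obj \<phi>2 A2 yh (snd h) ((1 - \<tau>) * \<beta>2) (snd q)
                         \<le> prox_obj \<phi>2 A2 yh (snd h) ((1 - \<tau>) * \<beta>2) w"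
  shows "ffun \<phi>1 \<phi>2 A1 A2 b q ((1 - \<tau>) * \<beta>2)
    \<le> dfun X1 X2 \<phi>1 \<phi>2 A1 A2 b p1 p2 ((1 - \<tau>) *\<^sub>R ybar + \<tau> *\<^sub>R yh) ((1 - \<tau>) * \<beta>1)"
  unfolding dfun_def
proof (rule cInf_greatest)
  show "lagr \<phi>1 \<phi>2 A1 A2 b p1 p2 ((1 - \<tau>) * \<beta>1) ((1 - \<tau>) *\<^sub>R ybar + \<tau> *\<^sub>R yh) ` (X1 \<times> X2) \<noteq> {}"
    using ne by simp
next
  fix val
  assume "val \<in> lagr \<phi>1 \<phi>2 A1 A2 b p1 p2 ((1 - \<tau>) * \<beta>1) ((1 - \<tau>) *\<^sub>R ybar + \<tau> *\<^sub>R yh) ` (X1 \<times> X2)"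
  then obtain v where v: "v \<in> X1 \<times> X2"
    and val: "val = lagr \<phi>1 \<phi>2 A1 A2 b p1 p2 ((1 - \<tau>) * \<beta>1) ((1 - \<tau>) *\<^sub>R ybar + \<tau> *\<^sub>R yh) v"
    by blast
  define L where "L = lagr \<phi>1 \<phi>2 A1 A2 b p1 p2 \<beta>1 ybar"
  define growth_term where
    "growth_term = \<beta>1 * (\<sigma>1 / 2 * (norm (fst v - fst z))\<^sup>2 + \<sigma>2 / 2 * (norm (snd v - snd z))\<^sup>2)"
  have cvx: "convex X1" "convex X2"
    using sc unfolding strongly_convex_on_def by auto
  have "ffun \<phi>1 \<phi>2 A1 A2 b xbar \<beta>2 + growth_term \<le> L v"
    using egap lagr_growth[OF phi sc _ z z_min v] beta unfolding L_def growth_term_def by force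
  then have "(1 - \<tau>) * (ffun \<phi>1 \<phi>2 A1 A2 b xbar \<beta>2 + growth_term) \<le> (1 - \<tau>) * L v"
    using tau by (intro mult_left_mono) auto
  moreover have "val = (1 - \<tau>) * L v
      + \<tau> * (\<phi>1 (fst v) + \<phi>2 (snd v) + yh \<bullet> (A1 *v fst v + A2 *v snd v - b))"
    unfolding val L_def lagr_def by (simp add: inner_add_left algebra_simps)
  ultimately show "ffun \<phi>1 \<phi>2 A1 A2 b q ((1 - \<tau>) * \<beta>2) \<le> val"
    using primal_step_bound[OF phi cvx sigma beta tau xbar z v cond h yh q_min]
    unfolding growth_term_def by linarith
qed

theorem theorem1:
  fixes X1 :: "(real^'n1) set" and X2 :: "(real^'n2) set"
    and \<phi>1 :: "real^'n1 \<Rightarrow> real" and \<phi>2 :: "real^'n2 \<Rightarrow> real"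
    and A1 :: "real^'n1^'m" and A2 :: "real^'n2^'m" and b :: "real^'m"
    and p1 :: "real^'n1 \<Rightarrow> real" and p2 :: "real^'n2 \<Rightarrow> real"
    and \<sigma>1 \<sigma>2 :: real and xc1 :: "real^'n1" and xc2 :: "real^'n2"
    and \<beta>1 \<beta>2 \<tau> :: real and xbar :: "(real^'n1) \<times> (real^'n2)" and ybar :: "real^'m"
  assumes X1: "X1 \<noteq> {}" "closed X1" "convex X1" "bounded X1"
    and X2: "X2 \<noteq> {}" "closed X2" "convex X2" "bounded X2"
    and phi: "convex_on UNIV \<phi>1" "convex_on UNIV \<phi>2"
    and prox: "prox_function X1 p1 \<sigma>1 xc1" "prox_function X2 p2 \<sigma>2 xc2"
    and beta: "\<beta>1 > 0" "\<beta>2 > 0"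
    and tau: "0 < \<tau>" "\<tau> < 1"
    and xbar_in: "xbar \<in> X1 \<times> X2"
    and egap: "ffun \<phi>1 \<phi>2 A1 A2 b xbar \<beta>2 \<le> dfun X1 X2 \<phi>1 \<phi>2 A1 A2 b p1 p2 ybar \<beta>1"
    and cond: "\<beta>1 * \<beta>2 \<ge> 2 * \<tau>\<^sup>2 / (1 - \<tau>)\<^sup>2 * max ((mnorm A1)\<^sup>2 / \<sigma>1) ((mnorm A2)\<^sup>2 / \<sigma>2)"
  shows
    "let \<beta>1p = (1 - \<tau>) * \<beta>1; \<beta>2p = (1 - \<tau>) * \<beta>2;
         xs = xstar X1 X2 \<phi>1 \<phi>2 A1 A2 b p1 p2 ybar \<beta>1;
         xhat = ((1 - \<tau>) *\<^sub>R fst xbar + \<tau> *\<^sub>R fst xs, (1 - \<tau>) *\<^sub>R snd xbar + \<tau> *\<^sub>R snd xs);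
         ybarp = (1 - \<tau>) *\<^sub>R ybar + \<tau> *\<^sub>R ystar A1 A2 b xhat \<beta>2p;
         xbarp = Pmap X1 X2 \<phi>1 \<phi>2 A1 A2 b xhat \<beta>2p
     in xbarp \<in> X1 \<times> X2 \<and>
        ffun \<phi>1 \<phi>2 A1 A2 b xbarp \<beta>2p \<le> dfun X1 X2 \<phi>1 \<phi>2 A1 A2 b p1 p2 ybarp \<beta>1p"
proof -
  define \<beta>2p where "\<beta>2p = (1 - \<tau>) * \<beta>2"
  define xs where "xs = xstar X1 X2 \<phi>1 \<phi>2 A1 A2 b p1 p2 ybar \<beta>1"
  define xhat where "xhat = ((1 - \<tau>) *\<^sub>R fst xbar + \<tau> *\<^sub>R fst xs, (1 - \<tau>) *\<^sub>R snd xbar + \<tau> *\<^sub>R snd xs)"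
  define yh where "yh = ystar A1 A2 b xhat \<beta>2p"
  define xbarp where "xbarp = Pmap X1 X2 \<phi>1 \<phi>2 A1 A2 b xhat \<beta>2p"
  have compact: "compact X1" "compact X2"
    using X1 X2 by (auto simp: compact_eq_bounded_closed)
  have p1: "continuous_on X1 p1" "strongly_convex_on X1 p1 \<sigma>1" "\<sigma>1 > 0"
    and p2: "continuous_on X2 p2" "strongly_convex_on X2 p2 \<sigma>2" "\<sigma>2 > 0"
    using prox unfolding prox_function_def by auto
  have "xs \<in> X1 \<times> X2 \<and>
      (\<forall>w\<in>X1 \<times> X2. lagr \<phi>1 \<phi>2 A1 A2 b p1 p2 \<beta>1 ybar xs \<le> lagr \<phi>1 \<phi>2 A1 A2 b p1 p2 \<beta>1 ybar w)"
    unfolding xs_def by (rule xstar_minimizes[OF compact(1) X1(1) compact(2) X2(1) phi p1(1) p2(1)])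
  then have xs: "xs \<in> X1 \<times> X2"
    and xs_min: "\<forall>w\<in>X1 \<times> X2. lagr \<phi>1 \<phi>2 A1 A2 b p1 p2 \<beta>1 ybar xs \<le> lagr \<phi>1 \<phi>2 A1 A2 b p1 p2 \<beta>1 ybar w"
    by auto
  have xbarp: "xbarp \<in> X1 \<times> X2"
    and xbarp_min: "\<forall>w\<in>X1. prox_obj \<phi>1 A1 yh (fst xhat) \<beta>2p (fst xbarp) \<le> prox_obj \<phi>1 A1 yh (fst xhat) \<beta>2p w"
      "\<forall>w\<in>X2. prox_obj \<phi>2 A2 yh (snd xhat) \<beta>2p (snd xbarp) \<le> prox_obj \<phi>2 A2 yh (snd xhat) \<beta>2p w"
    using proxblk_minimizes[OF compact(1) X1(1) phi(1), of A1 yh "fst xhat" \<beta>2p]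
      proxblk_minimizes[OF compact(2) X2(1) phi(2), of A2 yh "snd xhat" \<beta>2p]
    unfolding xbarp_def Pmap_def yh_def[symmetric] by auto
  have egap_xs: "ffun \<phi>1 \<phi>2 A1 A2 b xbar \<beta>2 \<le> lagr \<phi>1 \<phi>2 A1 A2 b p1 p2 \<beta>1 ybar xs"
    using egap dfun_eq_minimum[OF xs xs_min] by simp
  have xhat_mix: "xhat = (1 - \<tau>) *\<^sub>R xbar + \<tau> *\<^sub>R xs"
    unfolding xhat_def by (simp add: prod_eq_iff)
  have "ffun \<phi>1 \<phi>2 A1 A2 b xbarp \<beta>2p
      \<le> dfun X1 X2 \<phi>1 \<phi>2 A1 A2 b p1 p2 ((1 - \<tau>) *\<^sub>R ybar + \<tau> *\<^sub>R yh) ((1 - \<tau>) * \<beta>1)"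
    using gap_step[OF X1(1) X2(1) phi p1(2) p2(2) p1(3) p2(3) beta tau xbar_in xs xs_min egap_xs cond
        xhat_mix yh_def[unfolded \<beta>2p_def] xbarp_min[unfolded \<beta>2p_def]]
    unfolding \<beta>2p_def .
  then show ?thesis
    using xbarp unfolding Let_def xs_def[symmetric] xhat_def[symmetric] \<beta>2p_def[symmetric]
      yh_def[symmetric] xbarp_def[symmetric] by simp
qed

end
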